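(* Let $X$ be a Dedekind complete Riesz space with weak order unit $e$ and conditional expectation operator $T$ with $Te=e$. If $(x_{\alpha})$ is a decreasing net in $X_{+}$ that converges to $0$ in $T$-conditional probability, then $x_{\alpha}\downarrow0$.
   Context: A conditional expectation operator on $X$ is a strictly positive, order continuous linear projection $T$ with $Te=e$ whose range is a Dedekind complete Riesz subspace. $x_\alpha\to 0$ in $T$-conditional probability means that for every $\epsilon>0$ the net $TP_{(|x_\alpha|-\epsilon e)^{+}}e$ order converges to $0$, where $P_y$ is the band projection onto the band generated by $y$; order convergence $y_\alpha\to 0$ means $|y_\alpha|$ is eventually dominated by the terms of some net decreasing to $0$. *)

theory Defs
  imports Complex_Main "HOL-Library.Lattice_Algebras"
begin

text \<open>Riesz spaces are modelled by the type class
  ordered_real_vector + lattice_ab_group_add (an ordered real vector space that is a lattice).\<close>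

definition absv :: "'a::{ordered_real_vector, lattice_ab_group_add} \<Rightarrow> 'a" where
  "absv x = sup x (- x)"

definition posp :: "'a::{ordered_real_vector, lattice_ab_group_add} \<Rightarrow> 'a" where
  "posp x = sup x 0"

definition is_sup_in :: "'a::order set \<Rightarrow> 'a set \<Rightarrow> 'a \<Rightarrow> bool" where
  "is_sup_in U S a \<longleftrightarrow> a \<in> U \<and> (\<forall>s\<in>S. s \<le> a) \<and> (\<forall>b\<in>U. (\<forall>s\<in>S. s \<le> b) \<longrightarrow> a \<le> b)"

definition is_inf :: "'a::order set \<Rightarrow> 'a \<Rightarrow> bool" where
  "is_inf S a \<longleftrightarrow> (\<forall>s\<in>S. a \<le> s) \<and> (\<forall>b. (\<forall>s\<in>S. b \<le> s) \<longrightarrow> b \<le> a)"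

definition dedekind_complete_on :: "'a::order set \<Rightarrow> bool" where
  "dedekind_complete_on U \<longleftrightarrow>
     (\<forall>S. S \<subseteq> U \<and> S \<noteq> {} \<and> (\<exists>b\<in>U. \<forall>s\<in>S. s \<le> b) \<longrightarrow> (\<exists>a. is_sup_in U S a))"

definition dedekind_complete :: "'a::order itself \<Rightarrow> bool" where
  "dedekind_complete _ \<longleftrightarrow> dedekind_complete_on (UNIV :: 'a set)"

text \<open>Disjoint complement and the band generated by y (= {y}^dd, valid in Archimedean,
  in particular Dedekind complete, Riesz spaces).\<close>
definition disj_compl :: "'a::{ordered_real_vector, lattice_ab_group_add} set \<Rightarrow> 'a set" where
  "disj_compl S = {x. \<forall>s\<in>S. inf (absv x) (absv s) = 0}"

definition band_gen :: "'a::{ordered_real_vector, lattice_ab_group_add} \<Rightarrow> 'a set" where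
  "band_gen y = disj_compl (disj_compl {y})"

definition band_proj :: "'a::{ordered_real_vector, lattice_ab_group_add} \<Rightarrow> 'a \<Rightarrow> 'a" where
  "band_proj y x = (THE p. p \<in> band_gen y \<and> x - p \<in> disj_compl (band_gen y))"

definition weak_order_unit :: "'a::{ordered_real_vector, lattice_ab_group_add} \<Rightarrow> bool" where
  "weak_order_unit e \<longleftrightarrow> 0 \<le> e \<and> (\<forall>x. inf (absv x) e = 0 \<longrightarrow> x = 0)"

definition downward_directed :: "'a::order set \<Rightarrow> bool" where
  "downward_directed D \<longleftrightarrow> D \<noteq> {} \<and> (\<forall>a\<in>D. \<forall>b\<in>D. \<exists>c\<in>D. c \<le> a \<and> c \<le> b)"

definition directed_index :: "'i::preorder itself \<Rightarrow> bool" where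
  "directed_index _ \<longleftrightarrow> (\<forall>a b :: 'i. \<exists>c. a \<le> c \<and> b \<le> c)"

text \<open>Order convergence of a net y to 0: |y_alpha| is eventually dominated by each term of some
  net decreasing to 0; the range of such a net is a downward directed set with infimum 0
  (and conversely every such set, indexed by itself, is a net decreasing to 0).\<close>
definition order_conv_0 :: "('i::preorder \<Rightarrow> 'a::{ordered_real_vector, lattice_ab_group_add}) \<Rightarrow> bool" where
  "order_conv_0 y \<longleftrightarrow> (\<exists>Z. downward_directed Z \<and> is_inf Z 0 \<and>
      (\<forall>z\<in>Z. \<exists>a0. \<forall>a. a0 \<le> a \<longrightarrow> absv (y a) \<le> z))"

definition decreasing_net :: "('i::preorder \<Rightarrow> 'a::order) \<Rightarrow> bool" where
  "decreasing_net x \<longleftrightarrow> (\<forall>a b. a \<le> b \<longrightarrow> x b \<le> x a)"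

definition decr_to_0 :: "('i::preorder \<Rightarrow> 'a::{ordered_real_vector, lattice_ab_group_add}) \<Rightarrow> bool" where
  "decr_to_0 x \<longleftrightarrow> decreasing_net x \<and> is_inf (range x) 0"

definition linear_op :: "('a::real_vector \<Rightarrow> 'a) \<Rightarrow> bool" where
  "linear_op T \<longleftrightarrow> (\<forall>x y. T (x + y) = T x + T y) \<and> (\<forall>c x. T (c *\<^sub>R x) = c *\<^sub>R T x)"

definition strictly_positive :: "('a::{ordered_real_vector, lattice_ab_group_add} \<Rightarrow> 'a) \<Rightarrow> bool" where
  "strictly_positive T \<longleftrightarrow> (\<forall>x. 0 \<le> x \<longrightarrow> 0 \<le> T x) \<and> (\<forall>x. 0 < x \<longrightarrow> 0 < T x)"

definition order_continuous :: "('a::{ordered_real_vector, lattice_ab_group_add} \<Rightarrow> 'a) \<Rightarrow> bool" where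
  "order_continuous T \<longleftrightarrow> (\<forall>D. downward_directed D \<and> is_inf D 0 \<longrightarrow> is_inf (T ` D) 0)"

definition riesz_subspace :: "'a::{ordered_real_vector, lattice_ab_group_add} set \<Rightarrow> bool" where
  "riesz_subspace U \<longleftrightarrow> 0 \<in> U \<and> (\<forall>x\<in>U. \<forall>y\<in>U. x + y \<in> U \<and> sup x y \<in> U \<and> inf x y \<in> U)
     \<and> (\<forall>c x. x \<in> U \<longrightarrow> c *\<^sub>R x \<in> U)"

definition cond_exp_op :: "('a::{ordered_real_vector, lattice_ab_group_add} \<Rightarrow> 'a) \<Rightarrow> 'a \<Rightarrow> bool" where
  "cond_exp_op T e \<longleftrightarrow> strictly_positive T \<and> order_continuous T \<and> linear_op T
     \<and> (\<forall>x. T (T x) = T x) \<and> T e = e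
     \<and> riesz_subspace (range T) \<and> dedekind_complete_on (range T)"

definition cond_prob_conv_0 ::
  "('a::{ordered_real_vector, lattice_ab_group_add} \<Rightarrow> 'a) \<Rightarrow> 'a \<Rightarrow> ('i::preorder \<Rightarrow> 'a) \<Rightarrow> bool" where
  "cond_prob_conv_0 T e x \<longleftrightarrow>
     (\<forall>\<epsilon>>0. order_conv_0 (\<lambda>a. T (band_proj (posp (absv (x a) - \<epsilon> *\<^sub>R e)) e)))"

end

theory Submission
  imports Defs
begin

text \<open>Let \<open>b\<close> be a lower bound of the net and \<open>\<epsilon> > 0\<close>. Then \<open>y = (b - \<epsilon>e)\<^sup>+\<close> lies
  below every \<open>(x\<^sub>\<alpha> - \<epsilon>e)\<^sup>+\<close>, so \<open>e \<and> y\<close> lies below the projection of \<open>e\<close> onto the band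
  generated by \<open>(x\<^sub>\<alpha> - \<epsilon>e)\<^sup>+\<close>, for every \<open>\<alpha>\<close>. Hence \<open>T(e \<and> y)\<close> is a lower bound of a net
  order converging to \<open>0\<close>, so \<open>T(e \<and> y) = 0\<close>; strict positivity gives \<open>e \<and> y = 0\<close> and,
  \<open>e\<close> being a weak unit, \<open>y = 0\<close>, i.e. \<open>b \<le> \<epsilon>e\<close>. As Dedekind complete spaces are
  Archimedean, \<open>b \<le> 0\<close>. Neither the monotonicity of the net nor the directedness of the index
  set is needed for this; the former only enters the conclusion.\<close>

lemma absv_ge: "x \<le> absv x" "- x \<le> absv x"
  for x :: "'a::{ordered_real_vector, lattice_ab_group_add}"
  by (simp_all add: absv_def)

lemma absv_nonneg: "0 \<le> absv x"
  for x :: "'a::{ordered_real_vector, lattice_ab_group_add}"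
  using add_mono[OF absv_ge] by (metis add.right_inverse zero_le_double_add_iff_zero_le_single_add)

lemma absv_of_nonneg: "0 \<le> x \<Longrightarrow> absv x = x"
  for x :: "'a::{ordered_real_vector, lattice_ab_group_add}"
  by (simp add: absv_def sup_absorb1 order_trans[of "- x" 0 x])

lemma absv_eq_0_iff: "absv x = 0 \<longleftrightarrow> x = 0"
  for x :: "'a::{ordered_real_vector, lattice_ab_group_add}"
  by (simp add: absv_def)

lemma absv_diff_le: "absv (a - b) \<le> absv a + absv b"
  for a b :: "'a::{ordered_real_vector, lattice_ab_group_add}"
  using add_mono[OF absv_ge(1)[of a] absv_ge(2)[of b]]
    add_mono[OF absv_ge(2)[of a] absv_ge(1)[of b]]
  by (simp add: absv_def)

lemma posp_eq_pprt: "posp x = pprt x"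
  by (simp add: posp_def pprt_def)

lemma inf_add_le:
  fixes a b c :: "'a::lattice_ab_group_add"
  assumes "0 \<le> a" "0 \<le> b" "0 \<le> c"
  shows "inf a (b + c) \<le> inf a b + inf a c"
proof -
  have "a \<le> a + a" "a \<le> b + a" "a \<le> a + c"
    using assms by (simp_all add: add_increasing add_increasing2)
  then have "inf a (b + c) \<le> inf (inf (a + a) (b + a)) (inf (a + c) (b + c))"
    by (meson inf.coboundedI1 inf_le2 le_inf_iff)
  also have "\<dots> = inf a b + inf a c"
    by (simp add: add_inf_distrib_left add_inf_distrib_right)
  finally show ?thesis .
qed

lemma inf_add_eq_0:
  fixes a b c :: "'a::lattice_ab_group_add"
  assumes "0 \<le> a" "0 \<le> b" "0 \<le> c" "inf a b = 0" "inf a c = 0"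
  shows "inf a (b + c) = 0"
  using inf_add_le[OF assms(1-3)] assms by (simp add: antisym add_nonneg_nonneg)

lemma inf_scaleR_of_nat_eq_0:
  fixes a b :: "'a::{ordered_real_vector, lattice_ab_group_add}"
  assumes "0 \<le> a" "0 \<le> b" "inf a b = 0"
  shows "inf a (real n *\<^sub>R b) = 0"
proof (induction n)
  case 0
  show ?case using assms by (simp add: inf.absorb2)
next
  case (Suc n)
  have "real (Suc n) *\<^sub>R b = b + real n *\<^sub>R b" by (simp add: scaleR_left_distrib)
  moreover have "0 \<le> real n *\<^sub>R b" using assms(2) by (simp add: scaleR_nonneg_nonneg)
  ultimately show ?case using inf_add_eq_0[OF assms(1,2)] Suc assms(3) by simp
qed

lemma inf_eq_0_if_is_sup_in:
  fixes w p :: "'a::lattice_ab_group_add"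
  assumes "is_sup_in UNIV S p" "\<forall>s\<in>S. inf w s = 0" "0 \<le> w" "0 \<le> p"
  shows "inf w p = 0"
proof -
  have "s \<le> sup w p - w" if "s \<in> S" for s
  proof -
    have "s = sup w s - w"
      using add_eq_inf_sup[of w s] assms(2) that by (simp add: algebra_simps)
    also have "\<dots> \<le> sup w p - w"
      using assms(1) that unfolding is_sup_in_def by (simp add: sup.coboundedI2)
    finally show ?thesis .
  qed
  then have "p \<le> sup w p - w" using assms(1) unfolding is_sup_in_def by auto
  then have "inf w p \<le> 0" using add_eq_inf_sup[of w p] by (simp add: algebra_simps)
  then show ?thesis using assms(3,4) by (simp add: antisym)
qed

lemma diff_in_disj_compl:
  fixes a b :: "'a::{ordered_real_vector, lattice_ab_group_add}"
  assumes "a \<in> disj_compl S" "b \<in> disj_compl S"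
  shows "a - b \<in> disj_compl S"
  unfolding disj_compl_def
proof (intro CollectI ballI)
  fix s assume "s \<in> S"
  then have "inf (absv s) (absv a) = 0" "inf (absv s) (absv b) = 0"
    using assms unfolding disj_compl_def by (auto simp: inf.commute)
  then have "inf (absv s) (absv a + absv b) = 0"
    by (simp add: inf_add_eq_0 absv_nonneg)
  moreover have "inf (absv (a - b)) (absv s) \<le> inf (absv s) (absv a + absv b)"
    using absv_diff_le[of a b] by (simp add: le_infI1 le_infI2)
  ultimately show "inf (absv (a - b)) (absv s) = 0"
    by (simp add: antisym absv_nonneg)
qed

lemma in_disj_compl_self_eq_0:
  fixes v :: "'a::{ordered_real_vector, lattice_ab_group_add}"
  assumes "v \<in> disj_compl S" "v \<in> S"
  shows "v = 0"
  using assms by (auto simp: disj_compl_def absv_eq_0_iff)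

lemma in_disj_compl_band_gen:
  fixes v :: "'a::{ordered_real_vector, lattice_ab_group_add}"
  assumes "inf (absv v) (absv y) = 0"
  shows "v \<in> disj_compl (band_gen y)"
  using assms unfolding band_gen_def disj_compl_def by (auto simp: inf_commute)

lemma band_proj_eqI:
  fixes x :: "'a::{ordered_real_vector, lattice_ab_group_add}"
  assumes "p \<in> band_gen y" "x - p \<in> disj_compl (band_gen y)"
  shows "band_proj y x = p"
  unfolding band_proj_def
proof (rule the_equality)
  fix q assume q: "q \<in> band_gen y \<and> x - q \<in> disj_compl (band_gen y)"
  have "q - p \<in> band_gen y"
    using q assms(1) unfolding band_gen_def by (simp add: diff_in_disj_compl)
  moreover have "(x - p) - (x - q) \<in> disj_compl (band_gen y)"
    using q assms(2) diff_in_disj_compl by blast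
  ultimately show "q = p"
    using in_disj_compl_self_eq_0[of "q - p"] by simp
qed (use assms in blast)

text \<open>The band projection is realised as \<open>P\<^sub>y e = sup\<^sub>n (e \<and> n y)\<close>, which exists by
  Dedekind completeness.\<close>

lemma sup_inf_multiples_band_decomposition:
  fixes e y p :: "'a::{ordered_real_vector, lattice_ab_group_add}"
  assumes p: "is_sup_in UNIV (range (\<lambda>n::nat. inf e (real n *\<^sub>R y))) p"
    and "0 \<le> e" "0 \<le> y"
  shows "0 \<le> p" "p \<le> e" "inf (e - p) y = 0"
proof -
  have ub: "inf e (real n *\<^sub>R y) \<le> p" for n :: nat
    using p unfolding is_sup_in_def by auto
  have lub: "(\<And>n::nat. inf e (real n *\<^sub>R y) \<le> b) \<Longrightarrow> p \<le> b" for b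
    using p unfolding is_sup_in_def by auto
  show "0 \<le> p" using ub[of 0] \<open>0 \<le> e\<close> by (simp add: inf.absorb2)
  show "p \<le> e" by (rule lub) simp
  define u where "u = inf (e - p) y"
  have "inf e (real n *\<^sub>R y) \<le> p - u" for n :: nat
  proof -
    have "inf e (real n *\<^sub>R y) + u \<le> p + (e - p)"
      using ub[of n] by (rule add_mono) (simp add: u_def)
    moreover have "inf e (real n *\<^sub>R y) + u \<le> real n *\<^sub>R y + y"
      by (rule add_mono) (simp_all add: u_def)
    ultimately have "inf e (real n *\<^sub>R y) + u \<le> inf (p + (e - p)) (real n *\<^sub>R y + y)"
      by simp
    also have "\<dots> = inf e (real (Suc n) *\<^sub>R y)" by (simp add: scaleR_left_distrib add.commute)
    also have "\<dots> \<le> p" by (rule ub)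
    finally show ?thesis by (simp add: algebra_simps)
  qed
  then have "p \<le> p - u" by (rule lub)
  moreover have "0 \<le> u" using \<open>p \<le> e\<close> \<open>0 \<le> y\<close> by (simp add: u_def)
  ultimately have "u = 0" by simp
  then show "inf (e - p) y = 0" by (simp add: u_def)
qed

lemma sup_inf_multiples_in_band_gen:
  fixes e y p :: "'a::{ordered_real_vector, lattice_ab_group_add}"
  assumes p: "is_sup_in UNIV (range (\<lambda>n::nat. inf e (real n *\<^sub>R y))) p"
    and "0 \<le> e" "0 \<le> y"
  shows "p \<in> band_gen y"
  unfolding band_gen_def disj_compl_def[of "disj_compl {y}"]
proof (intro CollectI ballI)
  fix w assume "w \<in> disj_compl {y}"
  then have wy: "inf (absv w) y = 0"
    unfolding disj_compl_def using absv_of_nonneg[OF \<open>0 \<le> y\<close>] by auto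
  have "inf (absv w) s = 0" if s_range: "s \<in> range (\<lambda>n::nat. inf e (real n *\<^sub>R y))" for s
  proof -
    obtain n :: nat where s: "s = inf e (real n *\<^sub>R y)" using s_range by (rule rangeE)
    have "inf (absv w) s \<le> inf (absv w) (real n *\<^sub>R y)"
      unfolding s by (simp add: inf.coboundedI2)
    also have "\<dots> = 0" by (rule inf_scaleR_of_nat_eq_0[OF absv_nonneg \<open>0 \<le> y\<close> wy])
    finally show ?thesis
      using s assms(2,3) absv_nonneg[of w] by (simp add: antisym scaleR_nonneg_nonneg)
  qed
  moreover have "0 \<le> p" by (rule sup_inf_multiples_band_decomposition[OF assms])
  ultimately have "inf (absv w) p = 0"
    using inf_eq_0_if_is_sup_in[OF p _ absv_nonneg] by blast
  then show "inf (absv p) (absv w) = 0"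
    using absv_of_nonneg[OF \<open>0 \<le> p\<close>] by (simp add: inf.commute)
qed

lemma band_proj_eq_sup_inf_multiples:
  fixes e y p :: "'a::{ordered_real_vector, lattice_ab_group_add}"
  assumes p: "is_sup_in UNIV (range (\<lambda>n::nat. inf e (real n *\<^sub>R y))) p"
    and "0 \<le> e" "0 \<le> y"
  shows "band_proj y e = p"
proof (rule band_proj_eqI)
  show "p \<in> band_gen y" by (rule sup_inf_multiples_in_band_gen[OF assms])
  have "inf (e - p) y = 0" "p \<le> e"
    by (rule sup_inf_multiples_band_decomposition[OF assms])+
  then show "e - p \<in> disj_compl (band_gen y)"
    using \<open>0 \<le> y\<close> by (simp add: in_disj_compl_band_gen absv_of_nonneg)
qed

lemma band_proj_band_decomposition:
  fixes e y :: "'a::{ordered_real_vector, lattice_ab_group_add}"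
  assumes "dedekind_complete TYPE('a)" "0 \<le> e" "0 \<le> y"
  shows "0 \<le> band_proj y e" "band_proj y e \<le> e" "inf (e - band_proj y e) y = 0"
proof -
  have "\<forall>s \<in> range (\<lambda>n::nat. inf e (real n *\<^sub>R y)). s \<le> e" by auto
  then obtain p where p: "is_sup_in UNIV (range (\<lambda>n::nat. inf e (real n *\<^sub>R y))) p"
    using assms(1) unfolding dedekind_complete_def dedekind_complete_on_def by blast
  show "0 \<le> band_proj y e" "band_proj y e \<le> e" "inf (e - band_proj y e) y = 0"
    using sup_inf_multiples_band_decomposition[OF p assms(2,3)]
    unfolding band_proj_eq_sup_inf_multiples[OF p assms(2,3)] by simp_all
qed

lemma inf_le_band_proj:
  fixes e y y' :: "'a::{ordered_real_vector, lattice_ab_group_add}"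
  assumes "dedekind_complete TYPE('a)" "0 \<le> e" "0 \<le> y" "y \<le> y'"
  shows "inf e y \<le> band_proj y' e"
proof -
  let ?p = "band_proj y' e"
  have y': "0 \<le> y'" using assms(3,4) by order
  note p = band_proj_band_decomposition[OF assms(1,2) y']
  have "inf e y \<le> inf y' (?p + (e - ?p))"
    using assms(4) by (simp add: le_infI1 le_infI2)
  also have "\<dots> \<le> inf y' ?p + inf y' (e - ?p)"
    by (rule inf_add_le) (use y' p in auto)
  also have "\<dots> = inf y' ?p" using p(3) by (simp add: inf.commute)
  finally show ?thesis by (simp add: le_infI2)
qed

lemma dedekind_complete_archimedean:
  fixes e z :: "'a::{ordered_real_vector, lattice_ab_group_add}"
  assumes "dedekind_complete TYPE('a)" "0 \<le> e" "\<And>\<epsilon>. \<epsilon> > 0 \<Longrightarrow> z \<le> \<epsilon> *\<^sub>R e"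
  shows "z \<le> 0"
proof -
  have "\<forall>s \<in> range (\<lambda>n::nat. real n *\<^sub>R z). s \<le> e"
  proof
    fix s assume "s \<in> range (\<lambda>n::nat. real n *\<^sub>R z)"
    then obtain n :: nat where s: "s = real n *\<^sub>R z" by (rule rangeE)
    show "s \<le> e"
    proof (cases "n = 0")
      case True
      then show ?thesis using s assms(2) by simp
    next
      case False
      then have "z \<le> (1 / real n) *\<^sub>R e" using assms(3) by simp
      then have "real n *\<^sub>R z \<le> real n *\<^sub>R ((1 / real n) *\<^sub>R e)"
        by (rule scaleR_left_mono) simp
      then show ?thesis using s False by simp
    qed
  qed
  then obtain s where s: "is_sup_in UNIV (range (\<lambda>n::nat. real n *\<^sub>R z)) s"
    using assms(1) unfolding dedekind_complete_def dedekind_complete_on_def by blast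
  have "real n *\<^sub>R z \<le> s - z" for n :: nat
  proof -
    have "real (Suc n) *\<^sub>R z \<le> s" using s unfolding is_sup_in_def by blast
    then show ?thesis by (simp add: scaleR_left_distrib algebra_simps)
  qed
  then have "s \<le> s - z" using s unfolding is_sup_in_def by blast
  then show ?thesis by simp
qed

lemma strictly_positive_mono:
  assumes "strictly_positive T" "linear_op T" "a \<le> b"
  shows "T a \<le> T b"
proof -
  have "0 \<le> T (b - a)" using assms(1,3) unfolding strictly_positive_def by simp
  moreover have "T b = T (b - a) + T a"
    using assms(2) unfolding linear_op_def by (metis diff_add_cancel)
  ultimately show ?thesis by simp
qed

lemma strictly_positive_eq_0D:
  assumes "strictly_positive T" "0 \<le> v" "T v = 0"
  shows "v = 0"
proof (rule ccontr)
  assume "v \<noteq> 0"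
  then have "0 < T v"
    using assms(1,2) unfolding strictly_positive_def by (simp add: order_less_le)
  then show False using assms(3) by simp
qed

lemma order_conv_0_lower_bound:
  assumes "order_conv_0 y" "\<And>a. c \<le> y a"
  shows "c \<le> 0"
proof -
  obtain Z where Z: "is_inf Z 0" "\<forall>z\<in>Z. \<exists>a0. \<forall>a. a0 \<le> a \<longrightarrow> absv (y a) \<le> z"
    using assms(1) unfolding order_conv_0_def by blast
  have "c \<le> z" if "z \<in> Z" for z
  proof -
    obtain a0 where "absv (y a0) \<le> z" using Z(2) \<open>z \<in> Z\<close> by blast
    then show ?thesis using assms(2)[of a0] absv_ge(1)[of "y a0"] by order
  qed
  then show ?thesis using Z(1) unfolding is_inf_def by blast
qed

lemma cond_prob_conv_0_lower_bound_le:
  fixes T :: "'a::{ordered_real_vector, lattice_ab_group_add} \<Rightarrow> 'a"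
    and x :: "'i::preorder \<Rightarrow> 'a"
  assumes "dedekind_complete TYPE('a)" "weak_order_unit e"
    and "strictly_positive T" "linear_op T"
    and "cond_prob_conv_0 T e x" "\<And>a. z \<le> absv (x a)" "\<epsilon> > 0"
  shows "z \<le> \<epsilon> *\<^sub>R e"
proof -
  define y where "y = pprt (z - \<epsilon> *\<^sub>R e)"
  have "0 \<le> e" and weak_unit: "\<And>v. inf (absv v) e = 0 \<Longrightarrow> v = 0"
    using assms(2) unfolding weak_order_unit_def by auto
  have "0 \<le> y" by (simp add: y_def)
  have "T (inf e y) \<le> T (band_proj (posp (absv (x a) - \<epsilon> *\<^sub>R e)) e)" for a
  proof (rule strictly_positive_mono[OF assms(3,4)])
    have "y \<le> posp (absv (x a) - \<epsilon> *\<^sub>R e)"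
      using assms(6)[of a] by (simp add: y_def posp_eq_pprt)
    then show "inf e y \<le> band_proj (posp (absv (x a) - \<epsilon> *\<^sub>R e)) e"
      by (rule inf_le_band_proj[OF assms(1) \<open>0 \<le> e\<close> \<open>0 \<le> y\<close>])
  qed
  moreover have "order_conv_0 (\<lambda>a. T (band_proj (posp (absv (x a) - \<epsilon> *\<^sub>R e)) e))"
    using assms(5,7) unfolding cond_prob_conv_0_def by blast
  ultimately have "T (inf e y) \<le> 0" by (rule order_conv_0_lower_bound[rotated])
  moreover have "0 \<le> T (inf e y)"
    using assms(3) \<open>0 \<le> e\<close> \<open>0 \<le> y\<close> unfolding strictly_positive_def by simp
  ultimately have "inf e y = 0"
    using strictly_positive_eq_0D[OF assms(3)] \<open>0 \<le> e\<close> \<open>0 \<le> y\<close> by simp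
  then have "y = 0"
    using weak_unit absv_of_nonneg[OF \<open>0 \<le> y\<close>] by (simp add: inf.commute)
  then show ?thesis by (simp add: y_def le_zero_iff_zero_pprt[symmetric])
qed

theorem lemmaS12:
  fixes T :: "'a::{ordered_real_vector, lattice_ab_group_add} \<Rightarrow> 'a"
    and e :: 'a
    and x :: "'i::preorder \<Rightarrow> 'a"
  assumes "dedekind_complete TYPE('a)"
    and "weak_order_unit e"
    and "cond_exp_op T e"
    and "directed_index TYPE('i)"
    and "decreasing_net x"
    and "\<forall>a. 0 \<le> x a"
    and "cond_prob_conv_0 T e x"
  shows "decr_to_0 x"
proof -
  have T: "strictly_positive T" "linear_op T"
    using assms(3) unfolding cond_exp_op_def by auto
  have "b \<le> 0" if lower: "\<forall>s\<in>range x. b \<le> s" for b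
  proof (rule dedekind_complete_archimedean[OF assms(1)])
    show "0 \<le> e" using assms(2) unfolding weak_order_unit_def by simp
    have "b \<le> absv (x a)" for a
      using lower assms(6) by (simp add: absv_of_nonneg)
    then show "b \<le> \<epsilon> *\<^sub>R e" if "\<epsilon> > 0" for \<epsilon>
      using cond_prob_conv_0_lower_bound_le[OF assms(1,2) T assms(7)] that by blast
  qed
  then show ?thesis
    unfolding decr_to_0_def is_inf_def using assms(5,6) by auto
qed

end
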